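(* Let $\Theta$ be an MLL proof structure. If some run of Algorithm A on input $\Theta$ terminates in Step 5 with output no, then $\Theta$ is not an MLL proof net.
   Context: MLL formulas (with a single atom $p$) are given by $F ::= p \mid p^\bot \mid F\otimes G \mid F \wp G$, where $\wp$ denotes par. MLL links are: an ID-link, with two conclusions $p$ and $p^\bot$; a $\otimes$-link, with left premise $F$, right premise $G$ and conclusion $F\otimes G$; a $\wp$-link, with left premise $F$, right premise $G$ and conclusion $F\wp G$. An MLL proof structure $\Theta$ is a finite set of links such that each conclusion of a link is a premise of at most one other link, and each premise of a link is a conclusion of exactly one other link; a conclusion of $\Theta$ is a formula occurrence that is not a premise of any link. MLL proof nets are defined inductively: a single ID-link is a proof net; if $\Theta_1,\Theta_2$ are disjoint proof nets with conclusions $F$, $G$, adding a $\otimes$-link with premises $F,G$ gives a proof net; if $\Theta$ is a proof net with conclusions $F,G$, adding a $\wp$-link with left premise $F$ and right premise $G$ gives a proof net. Extreme-left DR-graph $S_{\forall\ell}(\Theta)$: the undirected graph on formula occurrences in which each ID-link joins its two conclusions, each $\otimes$-link joins its conclusion to both premises, and each $\wp$-link joins its conclusion to its left premise only. deNM-trees: finite trees with labeled nodes (carrying a label set of symbols $\ell_L$, $r_L$, $L$ a $\wp$-link) and $\wp$-nodes (labeled by a $\wp$-link $L$, of degree 1 or 2, with a port "above" and a port "below"; a degree-1 $\wp$-node is attached only through its port above). Translation $T(\Theta)$ (undefined unless $S_{\forall\ell}(\Theta)$ is a tree). If $\Theta$ is a single ID-link, $T(\Theta)$ is one degree-0 labeled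 node with label set $\emptyset$. Otherwise each link $L$ gives a piece: (i) ID-link, case 1: one conclusion $F$ is the right premise of a $\wp$-link $L'$ or a conclusion of $\Theta$; if $F^\bot$ is a premise of a $\wp$-link, $T(\Theta)$ is undefined; otherwise a degree-1 labeled node attached to the piece of the link having $F^\bot$ as premise, labeled $\{r_{L'}\}$ if $F$ is the right premise of $L'$ and $\emptyset$ otherwise. Case 2 (otherwise): if both conclusions are premises of $\wp$-links, undefined; otherwise a degree-2 labeled node attached to the pieces of the links having the conclusions as premises, labeled $\{\ell_{L'}\}$ if a conclusion is the left premise of a $\wp$-link $L'$, else $\emptyset$. (ii) $\otimes$-link, case 1 (conclusion is a conclusion of $\Theta$ or right premise of a $\wp$-link $L'$): a degree-2 labeled node attached to the pieces of the links producing its premises, labeled $\{r_{L'}\}$ or $\emptyset$ accordingly; case 2 (otherwise): a degree-3 labeled node attached additionally to the piece of the link having its conclusion as premise, labeled $\{\ell_{L'}\}$ if the conclusion is the left premise of a $\wp$-link $L'$, else $\emptyset$. (iii) $\wp$-link $L$: a $\wp$-node $n_L$ whose port above is attached to the piece of the link producing the left premise of $L$; case 1 (conclusion is the right premise of $\wp$-link $L'$): port below attached to a degree-1 labeled node labeled $\{r_{L'}\}$; case 2 (conclusion is the left premise of $\wp$-link $L'$): port below attached to a degree-2 labeled node labeled $\{\ell_{L'}\}$ which is attached to the port above of $n_{L'}$; case 3 (otherwise): only $n_L$, of degree 1 if its conclusion is a conclusion of $\Theta$, else its port below is attached to the piece of the link having its conclusion as premise. $T(\Theta)$ connects all pieces.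 Rewriting with one designated active labeled node: ($\wp$-elimination) if the active node $n$ is adjacent to a $\wp$-node $n_L$ through $n_L$'s port above and $n$'s label set contains $\ell_L$ and $r_L$, delete $n_L$ (its neighbour through the port below, if any, becomes adjacent to $n$); (union) if the active node is adjacent to a labeled node, merge them into one active node labeled by the union of label sets; (local jump) if the active node is adjacent to a $\wp$-node $n_L$ through $n_L$'s port below, the active node becomes the labeled node whose label set contains $r_L$ (tree unchanged). $S_{\rm full}$ is the set of all $\ell_L, r_L$ for $\wp$-links $L$ of $\Theta$. Algorithm A on input $\Theta$: (1) if $T(\Theta)$ is undefined, output no; (2) select an arbitrary labeled node as active; (3) rewrite using the three rules (in any order); (4) if local jump is applied to a $\wp$-node to which it was already applied, output no; (5) when no rule applies to the current tree $T'$, output yes if $T'$ is exactly one degree-0 node with label set $S_{\rm full}$, and no otherwise. *)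

theory Defs
  imports Main
begin

datatype form = PA | NA | Tens form form | Par form form
  (* PA = atom p, NA = p^bot, Tens = tensor, Par = par *)

(* Ax a b    : ID-link with conclusions a (labelled p) and b (labelled p^bot)
   TensL a b c : tensor-link, left premise a, right premise b, conclusion c
   ParL a b c  : par-link, left premise a, right premise b, conclusion c *)
datatype 'o link = Ax 'o 'o | TensL 'o 'o 'o | ParL 'o 'o 'o

fun concl :: "'o link \<Rightarrow> 'o set" where
  "concl (Ax a b) = {a, b}"
| "concl (TensL a b c) = {c}"
| "concl (ParL a b c) = {c}"

fun prems :: "'o link \<Rightarrow> 'o set" where
  "prems (Ax a b) = {}"
| "prems (TensL a b c) = {a, b}"
| "prems (ParL a b c) = {a, b}"

fun is_par :: "'o link \<Rightarrow> bool" where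
  "is_par (ParL a b c) = True"
| "is_par _ = False"

fun is_tens :: "'o link \<Rightarrow> bool" where
  "is_tens (TensL a b c) = True"
| "is_tens _ = False"

fun wt_link :: "('o \<Rightarrow> form) \<Rightarrow> 'o link \<Rightarrow> bool" where
  "wt_link fm (Ax a b) = (fm a = PA \<and> fm b = NA)"
| "wt_link fm (TensL a b c) = (a \<noteq> b \<and> a \<noteq> c \<and> b \<noteq> c \<and> fm c = Tens (fm a) (fm b))"
| "wt_link fm (ParL a b c) = (a \<noteq> b \<and> a \<noteq> c \<and> b \<noteq> c \<and> fm c = Par (fm a) (fm b))"

definition occs :: "'o link set \<Rightarrow> 'o set" where
  "occs \<Theta> = (\<Union>L\<in>\<Theta>. concl L \<union> prems L)"

definition concls :: "'o link set \<Rightarrow> 'o set" where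
  "concls \<Theta> = {x \<in> occs \<Theta>. \<forall>L\<in>\<Theta>. x \<notin> prems L}"

definition proof_structure :: "('o \<Rightarrow> form) \<Rightarrow> 'o link set \<Rightarrow> bool" where
  "proof_structure fm \<Theta> \<longleftrightarrow>
     finite \<Theta>
   \<and> (\<forall>L\<in>\<Theta>. wt_link fm L)
   \<and> (\<forall>L\<in>\<Theta>. \<forall>L'\<in>\<Theta>. L \<noteq> L' \<longrightarrow> concl L \<inter> concl L' = {})
   \<and> (\<forall>L\<in>\<Theta>. \<forall>L'\<in>\<Theta>. L \<noteq> L' \<longrightarrow> prems L \<inter> prems L' = {})
   \<and> (\<forall>L\<in>\<Theta>. concl L \<inter> prems L = {})
   \<and> (\<forall>L\<in>\<Theta>. \<forall>x\<in>prems L. \<exists>L'\<in>\<Theta>. L' \<noteq> L \<and> x \<in> concl L')"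

inductive proof_net :: "('o \<Rightarrow> form) \<Rightarrow> 'o link set \<Rightarrow> bool" for fm where
  pn_ax: "fm a = PA \<Longrightarrow> fm b = NA \<Longrightarrow> proof_net fm {Ax a b}"
| pn_tens: "proof_net fm \<Theta>1 \<Longrightarrow> proof_net fm \<Theta>2 \<Longrightarrow> occs \<Theta>1 \<inter> occs \<Theta>2 = {} \<Longrightarrow>
    F \<in> concls \<Theta>1 \<Longrightarrow> G \<in> concls \<Theta>2 \<Longrightarrow> c \<notin> occs \<Theta>1 \<union> occs \<Theta>2 \<Longrightarrow>
    fm c = Tens (fm F) (fm G) \<Longrightarrow> proof_net fm (insert (TensL F G c) (\<Theta>1 \<union> \<Theta>2))"
| pn_par: "proof_net fm \<Theta> \<Longrightarrow> F \<in> concls \<Theta> \<Longrightarrow> G \<in> concls \<Theta> \<Longrightarrow> F \<noteq> G \<Longrightarrow>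
    c \<notin> occs \<Theta> \<Longrightarrow> fm c = Par (fm F) (fm G) \<Longrightarrow> proof_net fm (insert (ParL F G c) \<Theta>)"

definition dr_edges :: "'o link set \<Rightarrow> 'o set set" where
  "dr_edges \<Theta> =
     {{a, b} |a b. Ax a b \<in> \<Theta>}
   \<union> {{a, c} |a b c. TensL a b c \<in> \<Theta>} \<union> {{b, c} |a b c. TensL a b c \<in> \<Theta>}
   \<union> {{a, c} |a b c. ParL a b c \<in> \<Theta>}"

definition is_tree :: "'v set \<Rightarrow> 'v set set \<Rightarrow> bool" where
  "is_tree V E \<longleftrightarrow>
     finite V \<and> V \<noteq> {}
   \<and> E \<subseteq> {{x, y} |x y. x \<in> V \<and> y \<in> V \<and> x \<noteq> y}
   \<and> (\<forall>x\<in>V. \<forall>y\<in>V. (x, y) \<in> {(u, v). {u, v} \<in> E}\<^sup>*)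
   \<and> \<not> (\<exists>vs. 3 \<le> length vs \<and> distinct vs
            \<and> (\<forall>i. Suc i < length vs \<longrightarrow> {vs ! i, vs ! Suc i} \<in> E)
            \<and> {last vs, hd vs} \<in> E)"

(* label symbols: Lsym L = l_L, Rsym L = r_L *)
datatype 'o sym = Lsym "'o link" | Rsym "'o link"

(* labeled nodes: LN L is the labeled node of an ID- or tensor-link L;
   XN L is the extra labeled node in the piece of a par-link L (its cases 1 and 2).
   The par-node n_L of a par-link L is identified with L itself. *)
datatype 'o node = LN "'o link" | XN "'o link"

(* In all trees arising
   from T(Theta) every edge joins a labeled node to a labeled node (le), or a
   labeled node to a port of a par-node: up = attached to the port above,
   dn = attached to the port below. *)
record 'o dstate =
  lnodes :: "'o node set"
  pnodes :: "'o link set"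
  lab :: "'o node \<Rightarrow> 'o sym set"
  up :: "('o node \<times> 'o link) set"
  dn :: "('o node \<times> 'o link) set"
  le :: "'o node set set"
  act :: "'o node"

definition leftp :: "'o link set \<Rightarrow> 'o \<Rightarrow> 'o link \<Rightarrow> bool" where
  "leftp \<Theta> x C \<longleftrightarrow> C \<in> \<Theta> \<and> (\<exists>b c. C = ParL x b c)"

definition rightp :: "'o link set \<Rightarrow> 'o \<Rightarrow> 'o link \<Rightarrow> bool" where
  "rightp \<Theta> x C \<longleftrightarrow> C \<in> \<Theta> \<and> (\<exists>a c. C = ParL a x c)"

definition parprem :: "'o link set \<Rightarrow> 'o \<Rightarrow> bool" where
  "parprem \<Theta> x \<longleftrightarrow> (\<exists>C. leftp \<Theta> x C \<or> rightp \<Theta> x C)"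

(* ID-link case 1 condition for conclusion F *)
definition id_case1 :: "'o link set \<Rightarrow> 'o \<Rightarrow> bool" where
  "id_case1 \<Theta> F \<longleftrightarrow> (\<exists>C. rightp \<Theta> F C) \<or> F \<in> concls \<Theta>"

(* the ID-link with conclusions a, b makes T undefined *)
definition id_bad :: "'o link set \<Rightarrow> 'o \<Rightarrow> 'o \<Rightarrow> bool" where
  "id_bad \<Theta> a b \<longleftrightarrow>
     (id_case1 \<Theta> a \<and> parprem \<Theta> b) \<or> (id_case1 \<Theta> b \<and> parprem \<Theta> a)
   \<or> (\<not> id_case1 \<Theta> a \<and> \<not> id_case1 \<Theta> b \<and> parprem \<Theta> a \<and> parprem \<Theta> b)"

definition T_defined :: "'o link set \<Rightarrow> bool" where
  "T_defined \<Theta> \<longleftrightarrow> is_tree (occs \<Theta>) (dr_edges \<Theta>)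
     \<and> ((\<exists>a b. \<Theta> = {Ax a b}) \<or> (\<forall>a b. Ax a b \<in> \<Theta> \<longrightarrow> \<not> id_bad \<Theta> a b))"

definition lnodesT :: "'o link set \<Rightarrow> 'o node set" where
  "lnodesT \<Theta> = {LN L |L. L \<in> \<Theta> \<and> \<not> is_par L}
              \<union> {XN L |L. L \<in> \<Theta> \<and> is_par L \<and> (\<exists>x\<in>concl L. parprem \<Theta> x)}"

definition symsT :: "'o link set \<Rightarrow> 'o link \<Rightarrow> 'o sym set" where
  "symsT \<Theta> L = {Lsym C |C. \<exists>x\<in>concl L. leftp \<Theta> x C} \<union> {Rsym C |C. \<exists>x\<in>concl L. rightp \<Theta> x C}"

fun labT :: "'o link set \<Rightarrow> 'o node \<Rightarrow> 'o sym set" where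
  "labT \<Theta> (LN L) = symsT \<Theta> L"
| "labT \<Theta> (XN L) = symsT \<Theta> L"

definition leT :: "'o link set \<Rightarrow> 'o node set set" where
  "leT \<Theta> = {{LN P, LN C} |P C. P \<in> \<Theta> \<and> C \<in> \<Theta> \<and> \<not> is_par P \<and> is_tens C \<and> concl P \<inter> prems C \<noteq> {}}"

definition upT :: "'o link set \<Rightarrow> ('o node \<times> 'o link) set" where
  "upT \<Theta> = {(LN P, C) |P C. P \<in> \<Theta> \<and> \<not> is_par P \<and> (\<exists>x\<in>concl P. leftp \<Theta> x C)}
          \<union> {(XN P, C) |P C. P \<in> \<Theta> \<and> is_par P \<and> (\<exists>x\<in>concl P. leftp \<Theta> x C)}"

definition dnT :: "'o link set \<Rightarrow> ('o node \<times> 'o link) set" where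
  "dnT \<Theta> = {(LN C, P) |P C. P \<in> \<Theta> \<and> C \<in> \<Theta> \<and> is_par P \<and> is_tens C \<and> concl P \<inter> prems C \<noteq> {}}
          \<union> {(XN P, P) |P. P \<in> \<Theta> \<and> is_par P \<and> (\<exists>x\<in>concl P. parprem \<Theta> x)}"

definition T_init :: "'o link set \<Rightarrow> 'o node \<Rightarrow> 'o dstate" where
  "T_init \<Theta> n0 = \<lparr>lnodes = lnodesT \<Theta>, pnodes = {L \<in> \<Theta>. is_par L}, lab = labT \<Theta>,
                    up = upT \<Theta>, dn = dnT \<Theta>, le = leT \<Theta>, act = n0\<rparr>"

definition ren :: "'o node \<Rightarrow> 'o node \<Rightarrow> 'o node \<Rightarrow> 'o node" where
  "ren m n x = (if x = m then n else x)"

definition merge :: "'o dstate \<Rightarrow> 'o node \<Rightarrow> 'o node \<Rightarrow> 'o dstate" where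
  "merge s n m = s\<lparr>lnodes := lnodes s - {m},
                   lab := (lab s)(m := {}, n := lab s n \<union> lab s m),
                   up := {(ren m n x, L) |x L. (x, L) \<in> up s},
                   dn := {(ren m n x, L) |x L. (x, L) \<in> dn s},
                   le := (\<lambda>e. ren m n ` e) ` (le s - {{n, m}})\<rparr>"

definition pelim :: "'o dstate \<Rightarrow> 'o node \<Rightarrow> 'o link \<Rightarrow> 'o dstate" where
  "pelim s n L = s\<lparr>pnodes := pnodes s - {L},
                   up := {p \<in> up s. snd p \<noteq> L},
                   dn := {p \<in> dn s. snd p \<noteq> L},
                   le := le s \<union> {{n, m} |m. (m, L) \<in> dn s}\<rparr>"

inductive astep :: "'o dstate \<Rightarrow> 'o link option \<Rightarrow> 'o dstate \<Rightarrow> bool" where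
  par_elim: "act s = n \<Longrightarrow> n \<in> lnodes s \<Longrightarrow> L \<in> pnodes s \<Longrightarrow> (n, L) \<in> up s \<Longrightarrow>
    Lsym L \<in> lab s n \<Longrightarrow> Rsym L \<in> lab s n \<Longrightarrow> astep s None (pelim s n L)"
| union: "act s = n \<Longrightarrow> n \<in> lnodes s \<Longrightarrow> m \<in> lnodes s \<Longrightarrow> m \<noteq> n \<Longrightarrow> {n, m} \<in> le s \<Longrightarrow>
    astep s None (merge s n m)"
| local_jump: "act s = n \<Longrightarrow> n \<in> lnodes s \<Longrightarrow> L \<in> pnodes s \<Longrightarrow> (n, L) \<in> dn s \<Longrightarrow>
    m \<in> lnodes s \<Longrightarrow> Rsym L \<in> lab s m \<Longrightarrow> astep s (Some L) (s\<lparr>act := m\<rparr>)"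

(* runs s J t: t is reached from s by rewriting steps in which the local jumps
   are applied to pairwise distinct par-nodes, J being the set of those *)
inductive runs :: "'o dstate \<Rightarrow> 'o link set \<Rightarrow> 'o dstate \<Rightarrow> bool" where
  runs_refl: "runs s {} s"
| runs_other: "astep s None s' \<Longrightarrow> runs s' J t \<Longrightarrow> runs s J t"
| runs_jump: "astep s (Some L) s' \<Longrightarrow> runs s' J t \<Longrightarrow> L \<notin> J \<Longrightarrow> runs s (insert L J) t"

definition irreducible :: "'o dstate \<Rightarrow> bool" where
  "irreducible s \<longleftrightarrow> \<not> (\<exists>k s'. astep s k s')"

definition S_full :: "'o link set \<Rightarrow> 'o sym set" where
  "S_full \<Theta> = {Lsym L |L. L \<in> \<Theta> \<and> is_par L} \<union> {Rsym L |L. L \<in> \<Theta> \<and> is_par L}"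

definition accepting :: "'o link set \<Rightarrow> 'o dstate \<Rightarrow> bool" where
  "accepting \<Theta> s \<longleftrightarrow> (\<exists>n. lnodes s = {n} \<and> pnodes s = {} \<and> le s = {} \<and> up s = {} \<and> dn s = {}
                             \<and> lab s n = S_full \<Theta>)"

definition algA_no_at_step5 :: "'o link set \<Rightarrow> bool" where
  "algA_no_at_step5 \<Theta> \<longleftrightarrow> T_defined \<Theta> \<and>
     (\<exists>n0 J t. n0 \<in> lnodesT \<Theta> \<and> runs (T_init \<Theta> n0) J t \<and> irreducible t \<and> \<not> accepting \<Theta> t)"

end

theory Submission
  imports Defs "HOL-Library.Transitive_Closure_Table"
begin

(* Run Algorithm A alongside the proof structure: each labeled node m of the current deNM-tree
   stands for the set reg m of links whose pieces have been merged into it. These regions are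
   disjoint and cover every link except the par-links whose par-node still hangs from a conclusion
   of the structure; each region is connected in the extreme-left DR-graph once the par-links still
   present as par-nodes are deleted; and wherever a link of a region meets a link outside it, the
   tree records the contact, either by an edge to the node of the neighbouring region or by a
   par-node that is still present. All three rewriting rules preserve this invariant. For
   par-elimination this needs acyclicity of the DR-graph, which forbids the eliminated par-node to
   hang below the very node that eliminates it.

   When no rule applies, the region of the active node meets the rest of the structure only at
   premises of par-links outside it having a premise outside it. In a proof net such a set of links
   is empty or everything (induction on the construction of the net), so the active region is the
   whole structure and the tree is a single node labeled S_full: the run answers yes. *)

definition occ :: "'o link \<Rightarrow> 'o set" where
  "occ L = concl L \<union> prems L"

definition produced :: "'o link set \<Rightarrow> 'o set" where
  "produced R = (\<Union>L\<in>R. concl L)"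

lemma tens_not_par: "is_tens L \<Longrightarrow> \<not> is_par L"
  by (cases L) auto

lemma is_par_cases:
  assumes "is_par P"
  obtains a b c where "P = ParL a b c"
  using assms by (cases P) auto

lemma produced_Un: "produced (A \<union> B) = produced A \<union> produced B"
  unfolding produced_def by blast

lemma concls_produced:
  assumes "F \<in> concls \<Theta>"
  obtains Y where "Y \<in> \<Theta>" "F \<in> concl Y"
  using assms unfolding concls_def occs_def by blast

lemma concls_not_prem:
  "F \<in> concls \<Theta> \<Longrightarrow> Y \<in> \<Theta> \<Longrightarrow> F \<notin> prems Y"
  unfolding concls_def by blast

lemma par_prem_parprem:
  assumes "is_par C" "C \<in> \<Theta>" "x \<in> prems C"
  shows "parprem \<Theta> x"
proof -
  obtain a b c where "C = ParL a b c"
    using assms(1) by (rule is_par_cases)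
  then show ?thesis
    using assms(2,3) unfolding parprem_def leftp_def rightp_def by auto
qed

lemma Lsym_symsT: "Lsym C \<in> symsT \<Theta> X \<longleftrightarrow> C \<in> \<Theta> \<and> (\<exists>a b c. C = ParL a b c \<and> a \<in> concl X)"
  unfolding symsT_def leftp_def by auto

lemma Rsym_symsT: "Rsym C \<in> symsT \<Theta> X \<longleftrightarrow> C \<in> \<Theta> \<and> (\<exists>a b c. C = ParL a b c \<and> b \<in> concl X)"
  unfolding symsT_def rightp_def by auto

section \<open>Proof nets have no proper par-isolated part\<close>

definition par_isolated :: "'o link set \<Rightarrow> 'o link set \<Rightarrow> bool" where
  "par_isolated \<Theta> R \<longleftrightarrow> (\<forall>X\<in>R. \<forall>Y\<in>\<Theta> - R. \<forall>x\<in>occ X \<inter> occ Y.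
     \<exists>a b c. Y = ParL a b c \<and> x \<in> {a, b} \<and> \<not> (a \<in> occs R \<and> b \<in> occs R))"

lemma par_isolatedE:
  assumes "par_isolated \<Theta> R" "X \<in> R" "Y \<in> \<Theta>" "Y \<notin> R" "x \<in> occ X" "x \<in> occ Y"
  obtains a b c where "Y = ParL a b c" "x \<in> {a, b}" "\<not> (a \<in> occs R \<and> b \<in> occs R)"
  using assms unfolding par_isolated_def by blast

lemma par_isolated_restrict:
  assumes "par_isolated \<Theta> R" "\<Theta>' \<subseteq> \<Theta>"
  shows "par_isolated \<Theta>' (R \<inter> \<Theta>')"
proof -
  have "occs (R \<inter> \<Theta>') \<subseteq> occs R"
    unfolding occs_def by auto
  then show ?thesis
    using assms unfolding par_isolated_def by blast
qed

lemma par_isolated_closed: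
  assumes "par_isolated \<Theta> R" "X \<in> R" "Y \<in> \<Theta>" "x \<in> occ X" "x \<in> occ Y"
    and "\<not> is_par Y \<or> x \<notin> prems Y"
  shows "Y \<in> R"
proof (rule ccontr)
  assume "Y \<notin> R"
  then obtain a b c where "Y = ParL a b c" "x \<in> {a, b}"
    using assms(1-5) by (blast elim: par_isolatedE)
  then show False
    using assms(6) by auto
qed

lemma par_isolated_tens_glue:
  assumes "par_isolated \<Theta> R" "X \<in> \<Theta>" "T \<in> \<Theta>" "x \<in> concl X" "x \<notin> prems X" "x \<in> prems T"
    and "\<not> is_par T"
  shows "T \<in> R \<longleftrightarrow> X \<in> R"
  using par_isolated_closed[OF assms(1), of T X x] par_isolated_closed[OF assms(1), of X T x]
    assms(2-7)
  by (auto simp: occ_def)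

lemma proof_net_par_isolated:
  assumes "proof_net fm \<Theta>" "R \<subseteq> \<Theta>" "par_isolated \<Theta> R"
  shows "R = {} \<or> R = \<Theta>"
  using assms
proof (induction arbitrary: R rule: proof_net.induct)
  case (pn_ax a b)
  then show ?case by auto
next
  case (pn_tens \<Theta>1 \<Theta>2 F G c)
  let ?T = "TensL F G c"
  note glue = par_isolated_tens_glue[OF pn_tens.prems(2)]
  have R1: "R \<inter> \<Theta>1 = {} \<or> R \<inter> \<Theta>1 = \<Theta>1"
    by (rule pn_tens.IH(1)) (auto intro: par_isolated_restrict[OF pn_tens.prems(2)])
  have R2: "R \<inter> \<Theta>2 = {} \<or> R \<inter> \<Theta>2 = \<Theta>2"
    by (rule pn_tens.IH(2)) (auto intro: par_isolated_restrict[OF pn_tens.prems(2)])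
  obtain Y1 Y2 where Y: "Y1 \<in> \<Theta>1" "F \<in> concl Y1" "Y2 \<in> \<Theta>2" "G \<in> concl Y2"
    using pn_tens.hyps(4,5) by (meson concls_produced)
  have "?T \<in> R \<longleftrightarrow> Y1 \<in> R" "?T \<in> R \<longleftrightarrow> Y2 \<in> R"
    using glue[of Y1 ?T F] glue[of Y2 ?T G] Y
      concls_not_prem[OF pn_tens.hyps(4) Y(1)] concls_not_prem[OF pn_tens.hyps(5) Y(3)]
    by simp_all
  then show ?case
    using R1 R2 Y pn_tens.prems(1) by blast
next
  case (pn_par \<Theta> F G c)
  let ?P = "ParL F G c"
  have R0: "R \<inter> \<Theta> = {} \<or> R \<inter> \<Theta> = \<Theta>"
    by (rule pn_par.IH) (auto intro: par_isolated_restrict[OF pn_par.prems(2)])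
  obtain Y1 Y2 where Y: "Y1 \<in> \<Theta>" "F \<in> concl Y1" "Y2 \<in> \<Theta>" "G \<in> concl Y2"
    using pn_par.hyps(2,3) by (meson concls_produced)
  have "?P \<in> R \<Longrightarrow> Y1 \<in> R"
    by (rule par_isolated_closed[OF pn_par.prems(2), of ?P Y1 F])
      (use Y concls_not_prem[OF pn_par.hyps(2) Y(1)] in \<open>auto simp: occ_def\<close>)
  moreover have "?P \<in> R" if in_R: "Y1 \<in> R" "Y2 \<in> R"
  proof (rule ccontr)
    assume "?P \<notin> R"
    moreover have "F \<in> occs R" "G \<in> occs R"
      using in_R Y unfolding occs_def by auto
    ultimately show False
      using par_isolatedE[OF pn_par.prems(2) in_R(1), of ?P F] Y by (auto simp: occ_def)
  qed
  ultimately show ?case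
    using R0 Y pn_par.prems(1) by blast
qed

section \<open>The extreme-left DR-graph\<close>

lemma tree_edge_no_detour:
  assumes "is_tree V E" "{a, c} \<in> E" "a \<noteq> c"
  shows "(a, c) \<notin> {(u, v). {u, v} \<in> E \<and> {u, v} \<noteq> {a, c}}\<^sup>*"
proof
  let ?r = "\<lambda>u v. {u, v} \<in> E \<and> {u, v} \<noteq> {a, c}"
  assume "(a, c) \<in> {(u, v). {u, v} \<in> E \<and> {u, v} \<noteq> {a, c}}\<^sup>*"
  then have "?r\<^sup>*\<^sup>* a c"
    unfolding rtrancl_def by simp
  then obtain xs where "rtrancl_path ?r a xs c"
    by (auto simp: rtranclp_eq_rtrancl_path)
  then obtain ys where path: "rtrancl_path ?r a ys c" and dist: "distinct (a # ys)"
    by (rule rtrancl_path_distinct)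
  have "ys \<noteq> []"
    using path assms(3) by cases auto
  then have last: "last ys = c"
    by (rule rtrancl_path_last[OF path])
  have steps: "\<forall>i. Suc i < length (a # ys) \<longrightarrow> {(a # ys) ! i, (a # ys) ! Suc i} \<in> E"
    using rtrancl_path_nth[OF path] by auto
  have "3 \<le> length (a # ys)"
  proof (rule ccontr)
    assume "\<not> 3 \<le> length (a # ys)"
    then have "ys = [c]"
      using \<open>ys \<noteq> []\<close> last by (cases ys) (auto simp: Suc_le_eq)
    then show False
      using rtrancl_path_nth[OF path, of 0] by simp
  qed
  moreover have "{last (a # ys), hd (a # ys)} \<in> E"
    using last \<open>ys \<noteq> []\<close> assms(2) by (simp add: insert_commute)
  ultimately show False
    using assms(1) dist steps unfolding is_tree_def by blast
qed

fun dr_link :: "'o link \<Rightarrow> ('o \<times> 'o) set" where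
  "dr_link (Ax a b) = {(a, b), (b, a)}"
| "dr_link (TensL a b c) = {(a, c), (c, a), (b, c), (c, b)}"
| "dr_link (ParL a b c) = {(a, c), (c, a)}"

definition dr_without :: "'o link set \<Rightarrow> 'o link set \<Rightarrow> ('o \<times> 'o) set" where
  "dr_without \<Theta> P = (\<Union>K\<in>\<Theta> - P. dr_link K)"

lemma dr_link_sym: "(u, v) \<in> dr_link K \<Longrightarrow> (v, u) \<in> dr_link K"
  by (cases K) auto

lemma dr_link_occ:
  "(u, v) \<in> dr_link K \<Longrightarrow> u \<in> occ K \<and> v \<in> occ K \<and> (u \<in> concl K \<or> v \<in> concl K)"
  by (cases K) (auto simp: occ_def)

lemma dr_link_dr_edges: "K \<in> \<Theta> \<Longrightarrow> (u, v) \<in> dr_link K \<Longrightarrow> {u, v} \<in> dr_edges \<Theta>"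
  by (cases K) (auto simp: dr_edges_def insert_commute)

lemma dr_link_connected:
  assumes "\<not> is_par K" "x \<in> occ K" "y \<in> occ K"
  shows "(x, y) \<in> (dr_link K)\<^sup>*"
proof (cases K)
  case (TensL p q c)
  then have "(x, c) \<in> (dr_link K)\<^sup>*" "(c, y) \<in> (dr_link K)\<^sup>*"
    using assms(2,3) by (auto simp: occ_def)
  then show ?thesis
    by (rule rtrancl_trans)
qed (use assms in \<open>auto simp: occ_def\<close>)

lemma dr_without_sym:
  assumes "(x, y) \<in> (dr_without \<Theta> P)\<^sup>*"
  shows "(y, x) \<in> (dr_without \<Theta> P)\<^sup>*"
proof -
  have "sym (dr_without \<Theta> P)"
    by (auto intro!: symI simp: dr_without_def dest: dr_link_sym)
  then show ?thesis
    using assms sym_rtrancl unfolding sym_def by blast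
qed

lemma dr_without_antimono:
  "P' \<subseteq> P \<Longrightarrow> (x, y) \<in> (dr_without \<Theta> P)\<^sup>* \<Longrightarrow> (x, y) \<in> (dr_without \<Theta> P')\<^sup>*"
  using rtrancl_mono[of "dr_without \<Theta> P" "dr_without \<Theta> P'"] unfolding dr_without_def by blast

locale mll_structure =
  fixes fm :: "'o \<Rightarrow> form" and \<Theta> :: "'o link set"
  assumes proof_structure: "proof_structure fm \<Theta>"
begin

lemma concl_unique: "L \<in> \<Theta> \<Longrightarrow> L' \<in> \<Theta> \<Longrightarrow> x \<in> concl L \<Longrightarrow> x \<in> concl L' \<Longrightarrow> L = L'"
  using proof_structure unfolding proof_structure_def by blast

lemma prems_unique: "L \<in> \<Theta> \<Longrightarrow> L' \<in> \<Theta> \<Longrightarrow> x \<in> prems L \<Longrightarrow> x \<in> prems L' \<Longrightarrow> L = L'"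
  using proof_structure unfolding proof_structure_def by blast

lemma concl_not_prems: "L \<in> \<Theta> \<Longrightarrow> x \<in> concl L \<Longrightarrow> x \<notin> prems L"
  using proof_structure unfolding proof_structure_def by blast

lemma prem_produced:
  assumes "L \<in> \<Theta>" "x \<in> prems L"
  obtains L' where "L' \<in> \<Theta>" "x \<in> concl L'"
  using assms proof_structure unfolding proof_structure_def by blast

lemma shared_occ:
  assumes "X \<in> \<Theta>" "Y \<in> \<Theta>" "X \<noteq> Y" "x \<in> occ X" "x \<in> occ Y"
  shows "x \<in> concl X \<and> x \<in> prems Y \<or> x \<in> prems X \<and> x \<in> concl Y"
  using assms concl_unique prems_unique unfolding occ_def by blast

lemma prem_smaller:
  assumes "L \<in> \<Theta>" "x \<in> prems L" "y \<in> concl L"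
  shows "size (fm x) < size (fm y)"
proof -
  have "wt_link fm L"
    using assms(1) proof_structure unfolding proof_structure_def by blast
  then show ?thesis
    using assms(2,3) by (cases L) auto
qed

lemma par_edge_no_detour:
  assumes tree: "is_tree (occs \<Theta>) (dr_edges \<Theta>)"
    and "P \<subseteq> \<Theta>" "ParL a b c \<in> P"
  shows "(a, c) \<notin> (dr_without \<Theta> P)\<^sup>*"
proof -
  let ?L = "ParL a b c"
  have L: "?L \<in> \<Theta>"
    using assms(2,3) by blast
  have "dr_without \<Theta> P \<subseteq> {(u, v). {u, v} \<in> dr_edges \<Theta> \<and> {u, v} \<noteq> {a, c}}"
  proof
    fix p
    assume "p \<in> dr_without \<Theta> P"
    then obtain K u v where K: "K \<in> \<Theta>" "K \<notin> P" and uv: "(u, v) \<in> dr_link K" "p = (u, v)"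
      unfolding dr_without_def by (cases p) auto
    have "{u, v} \<noteq> {a, c}"
    proof
      assume "{u, v} = {a, c}"
      then have "a \<in> occ K" "c \<in> occ K" "a \<in> concl K \<or> c \<in> concl K"
        using dr_link_occ[OF uv(1)] by (auto simp: doubleton_eq_iff)
      moreover have "K \<noteq> ?L"
        using K assms(3) by blast
      ultimately have "a \<in> concl K" "c \<in> prems K"
        using shared_occ[OF K(1) L, of c] concl_unique[OF K(1) L, of c] by (auto simp: occ_def)
      then show False
        using prem_smaller[OF L, of a c] prem_smaller[OF K(1), of c a] by simp
    qed
    then show "p \<in> {(u, v). {u, v} \<in> dr_edges \<Theta> \<and> {u, v} \<noteq> {a, c}}"
      using dr_link_dr_edges[OF K(1) uv(1)] uv(2) by simp
  qed
  moreover have "{a, c} \<in> dr_edges \<Theta>" "a \<noteq> c"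
    using L proof_structure unfolding dr_edges_def proof_structure_def by fastforce+
  ultimately show ?thesis
    using tree_edge_no_detour[OF tree] rtrancl_mono by blast
qed

lemma S_full_symsT: "(\<Union>L\<in>\<Theta>. symsT \<Theta> L) = S_full \<Theta>"
proof
  show "(\<Union>L\<in>\<Theta>. symsT \<Theta> L) \<subseteq> S_full \<Theta>"
    unfolding symsT_def leftp_def rightp_def S_full_def by force
  show "S_full \<Theta> \<subseteq> (\<Union>L\<in>\<Theta>. symsT \<Theta> L)"
  proof
    fix z
    assume "z \<in> S_full \<Theta>"
    then obtain L where L: "L \<in> \<Theta>" "is_par L" "z = Lsym L \<or> z = Rsym L"
      unfolding S_full_def by blast
    then obtain a b c where abc: "L = ParL a b c"
      by (auto elim: is_par_cases)
    obtain Za where "Za \<in> \<Theta>" "a \<in> concl Za"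
      using L(1) abc by (auto elim: prem_produced)
    moreover obtain Zb where "Zb \<in> \<Theta>" "b \<in> concl Zb"
      using L(1) abc by (auto elim: prem_produced)
    ultimately show "z \<in> (\<Union>L\<in>\<Theta>. symsT \<Theta> L)"
      using L abc by (auto simp: Lsym_symsT Rsym_symsT)
  qed
qed

end

section \<open>Regions of the labeled nodes\<close>

definition boundary_ok ::
    "'o dstate \<Rightarrow> ('o node \<Rightarrow> 'o link set) \<Rightarrow> 'o node \<Rightarrow> 'o link \<Rightarrow> 'o link \<Rightarrow> 'o \<Rightarrow> bool" where
  "boundary_ok s reg m X Y x \<longleftrightarrow>
     (\<exists>m'\<in>lnodes s. Y \<in> reg m' \<and> {m, m'} \<in> le s)
   \<or> (Y \<in> pnodes s \<and> x \<in> prems Y \<and> (\<forall>b c. Y = ParL x b c \<longrightarrow> (m, Y) \<in> up s))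
   \<or> (X \<in> pnodes s \<and> x \<in> prems X)"

lemma boundary_okE [consumes 1, case_names adjacent par_below par_in_region]:
  assumes "boundary_ok s reg m X Y x"
  obtains m' where "m' \<in> lnodes s" "Y \<in> reg m'" "{m, m'} \<in> le s"
    | "Y \<in> pnodes s" "x \<in> prems Y" "\<forall>b c. Y = ParL x b c \<longrightarrow> (m, Y) \<in> up s"
    | "X \<in> pnodes s" "x \<in> prems X"
  using assms unfolding boundary_ok_def by blast

lemma boundary_ok_adjacentI:
  "m' \<in> lnodes s \<Longrightarrow> Y \<in> reg m' \<Longrightarrow> {m, m'} \<in> le s \<Longrightarrow> boundary_ok s reg m X Y x"
  unfolding boundary_ok_def by blast

lemma boundary_ok_par_belowI:
  "Y \<in> pnodes s \<Longrightarrow> x \<in> prems Y \<Longrightarrow> (\<forall>b c. Y = ParL x b c \<longrightarrow> (m, Y) \<in> up s)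
    \<Longrightarrow> boundary_ok s reg m X Y x"
  unfolding boundary_ok_def by blast

lemma boundary_ok_par_in_regionI: "X \<in> pnodes s \<Longrightarrow> x \<in> prems X \<Longrightarrow> boundary_ok s reg m X Y x"
  unfolding boundary_ok_def by blast

definition dr_linked :: "'o link set \<Rightarrow> 'o dstate \<Rightarrow> ('o node \<Rightarrow> 'o link set) \<Rightarrow> 'o node set \<Rightarrow> bool"
  where "dr_linked \<Theta> s reg e \<longleftrightarrow> (\<exists>p q. e = {p, q} \<and> p \<noteq> q \<and> p \<in> lnodes s \<and> q \<in> lnodes s
    \<and> (\<exists>x\<in>produced (reg p). \<exists>y\<in>produced (reg q). (x, y) \<in> (dr_without \<Theta> (pnodes s))\<^sup>*))"

locale region_invariant = mll_structure +
  fixes s :: "'o dstate" and reg :: "'o node \<Rightarrow> 'o link set"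
  assumes active: "act s \<in> lnodes s"
    and region_nonempty: "m \<in> lnodes s \<Longrightarrow> reg m \<noteq> {}"
    and region_subset: "m \<in> lnodes s \<Longrightarrow> reg m \<subseteq> \<Theta>"
    and regions_disjoint: "m \<in> lnodes s \<Longrightarrow> m' \<in> lnodes s \<Longrightarrow> m \<noteq> m' \<Longrightarrow> reg m \<inter> reg m' = {}"
    and regions_cover: "X \<in> \<Theta> \<Longrightarrow> (\<exists>m\<in>lnodes s. X \<in> reg m) \<or> X \<in> pnodes s \<and> concl X \<subseteq> concls \<Theta>"
    and pnodes_par: "pnodes s \<subseteq> {P \<in> \<Theta>. is_par P}"
    and up_nodes: "(m, P) \<in> up s \<Longrightarrow> m \<in> lnodes s \<and> P \<in> pnodes s"
    and dn_iff: "(m, P) \<in> dn s \<longleftrightarrow> m \<in> lnodes s \<and> P \<in> pnodes s \<and> P \<in> reg m"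
    and le_linked: "e \<in> le s \<Longrightarrow> dr_linked \<Theta> s reg e"
    and labels: "m \<in> lnodes s \<Longrightarrow> lab s m = (\<Union>L\<in>reg m. symsT \<Theta> L)"
    and boundary: "m \<in> lnodes s \<Longrightarrow> X \<in> reg m \<Longrightarrow> Y \<in> \<Theta> - reg m \<Longrightarrow> x \<in> occ X \<Longrightarrow> x \<in> occ Y
      \<Longrightarrow> boundary_ok s reg m X Y x"
    and region_connected: "m \<in> lnodes s \<Longrightarrow> x \<in> produced (reg m) \<Longrightarrow> y \<in> produced (reg m)
      \<Longrightarrow> (x, y) \<in> (dr_without \<Theta> (pnodes s))\<^sup>*"

context region_invariant
begin

lemma pnode_cases:
  assumes "P \<in> pnodes s"
  obtains a b c where "P = ParL a b c"
  using assms pnodes_par by (cases P) auto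

lemma jump_target:
  assumes P: "P \<in> pnodes s"
  obtains m where "m \<in> lnodes s" "Rsym P \<in> lab s m"
proof -
  obtain a b c where abc: "P = ParL a b c"
    using P by (rule pnode_cases)
  have "P \<in> \<Theta>"
    using P pnodes_par by blast
  then obtain Z where Z: "Z \<in> \<Theta>" "b \<in> concl Z"
    using prem_produced[OF \<open>P \<in> \<Theta>\<close>, of b] abc by auto
  have "b \<notin> concls \<Theta>"
    using \<open>P \<in> \<Theta>\<close> abc unfolding concls_def by force
  then obtain m where "m \<in> lnodes s" "Z \<in> reg m"
    using regions_cover[OF Z(1)] Z(2) by blast
  moreover have "Rsym P \<in> symsT \<Theta> Z"
    using \<open>P \<in> \<Theta>\<close> abc Z(2) by (simp add: Rsym_symsT)
  ultimately show ?thesis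
    using labels that by blast
qed

lemma stuck_boundary:
  assumes stuck: "irreducible s" and n: "n = act s"
    and "X \<in> reg n" "Y \<in> \<Theta> - reg n" "x \<in> occ X" "x \<in> occ Y"
  shows "Y \<in> pnodes s \<and> x \<in> prems Y \<and> (\<forall>b c. Y = ParL x b c \<longrightarrow> (n, Y) \<in> up s)"
proof -
  have "n \<in> lnodes s"
    using active n by simp
  have no_union: "{n, m} \<notin> le s" if "m \<in> lnodes s" "Y \<in> reg m" for m
    using union[OF n[symmetric] \<open>n \<in> lnodes s\<close> that(1)] that assms(4) stuck
    unfolding irreducible_def by blast
  have no_jump: "(n, X) \<notin> dn s" if X: "X \<in> pnodes s"
  proof
    assume "(n, X) \<in> dn s"
    moreover obtain m where "m \<in> lnodes s" "Rsym X \<in> lab s m"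
      using X by (rule jump_target)
    ultimately show False
      using local_jump[OF n[symmetric] \<open>n \<in> lnodes s\<close> X] stuck unfolding irreducible_def by blast
  qed
  have "boundary_ok s reg n X Y x"
    using boundary \<open>n \<in> lnodes s\<close> assms(3-6) by blast
  moreover have "\<not> (X \<in> pnodes s \<and> x \<in> prems X)"
    using no_jump dn_iff \<open>n \<in> lnodes s\<close> assms(3) by blast
  ultimately show ?thesis
    using no_union unfolding boundary_ok_def by blast
qed

lemma stuck_region_isolated:
  assumes stuck: "irreducible s"
  shows "par_isolated \<Theta> (reg (act s))"
  unfolding par_isolated_def
proof (intro ballI)
  let ?n = "act s"
  let ?R = "reg ?n"
  fix X Y x
  assume XY: "X \<in> ?R" "Y \<in> \<Theta> - ?R" and x: "x \<in> occ X \<inter> occ Y"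
  have Y: "Y \<in> pnodes s" "x \<in> prems Y"
    using stuck_boundary[OF stuck refl XY] x by auto
  obtain a b c where Yabc: "Y = ParL a b c"
    using Y(1) by (rule pnode_cases)
  have "\<not> (a \<in> occs ?R \<and> b \<in> occs ?R)"
  proof
    assume ab: "a \<in> occs ?R \<and> b \<in> occs ?R"
    have "\<exists>Z\<in>?R. y \<in> concl Z" if "y \<in> {a, b}" for y
    proof -
      have y: "y \<in> occs ?R" "y \<in> prems Y"
        using that ab Yabc by auto
      obtain Z where Z: "Z \<in> ?R" "y \<in> concl Z \<or> y \<in> prems Z"
        using y(1) unfolding occs_def by blast
      moreover have "y \<notin> prems Z"
        using prems_unique[of Z Y y] region_subset[OF active] Z(1) XY(2) y(2) by blast
      ultimately show ?thesis
        by blast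
    qed
    then obtain Za Zb where Z: "Za \<in> ?R" "a \<in> concl Za" "Zb \<in> ?R" "b \<in> concl Zb"
      by blast
    have "Lsym Y \<in> lab s ?n" "Rsym Y \<in> lab s ?n"
      using Z XY(2) Yabc labels[OF active] by (auto simp: Lsym_symsT Rsym_symsT)
    moreover have "(?n, Y) \<in> up s"
      using stuck_boundary[OF stuck refl Z(1) XY(2), of a] Z(2) Yabc by (auto simp: occ_def)
    ultimately show False
      using par_elim[OF refl active Y(1)] stuck unfolding irreducible_def by blast
  qed
  then show "\<exists>a b c. Y = ParL a b c \<and> x \<in> {a, b} \<and> \<not> (a \<in> occs ?R \<and> b \<in> occs ?R)"
    using Y(2) Yabc by auto
qed

lemma stuck_accepting:
  assumes stuck: "irreducible s" and everything: "reg (act s) = \<Theta>"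
  shows "accepting \<Theta> s"
proof -
  let ?n = "act s"
  have "m = ?n" if "m \<in> lnodes s" for m
    using regions_disjoint[OF that active] region_nonempty[OF that] region_subset[OF that]
      everything
    by blast
  then have lnodes: "lnodes s = {?n}"
    using active by blast
  have pnodes: "pnodes s = {}"
  proof (rule ccontr)
    assume "pnodes s \<noteq> {}"
    then obtain P where P: "P \<in> pnodes s"
      by blast
    then have "(?n, P) \<in> dn s"
      using dn_iff active pnodes_par everything by blast
    moreover obtain m where "m \<in> lnodes s" "Rsym P \<in> lab s m"
      using P by (rule jump_target)
    ultimately show False
      using local_jump[OF refl active P] stuck unfolding irreducible_def by blast
  qed
  have "le s = {}"
  proof (rule ccontr)
    assume "le s \<noteq> {}"
    then obtain p q where "p \<noteq> q" "p \<in> lnodes s" "q \<in> lnodes s"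
      using le_linked unfolding dr_linked_def by blast
    then show False
      using lnodes by simp
  qed
  moreover have "up s = {}" "dn s = {}"
    using up_nodes dn_iff pnodes by fast+
  moreover have "lab s ?n = S_full \<Theta>"
    using labels[OF active] everything S_full_symsT by simp
  ultimately show ?thesis
    unfolding accepting_def using lnodes pnodes by blast
qed

end

section \<open>The translation satisfies the invariant\<close>

(* The labeled node of a tensor-link also owns the par-links whose par-nodes hang below it. *)
definition init_region :: "'o link set \<Rightarrow> 'o node \<Rightarrow> 'o link set" where
  "init_region \<Theta> k = (case k of
      LN L \<Rightarrow> insert L {P \<in> \<Theta>. is_par P \<and> is_tens L \<and> concl P \<inter> prems L \<noteq> {}}
    | XN P \<Rightarrow> {P})"

lemma init_region_LN:
  "P \<in> init_region \<Theta> (LN L) \<longleftrightarrow> P = L \<or> P \<in> \<Theta> \<and> is_par P \<and> is_tens L \<and> concl P \<inter> prems L \<noteq> {}"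
  by (simp add: init_region_def)

lemma init_region_XN: "init_region \<Theta> (XN P) = {P}"
  by (simp add: init_region_def)

lemma LN_in_lnodesT: "LN L \<in> lnodesT \<Theta> \<longleftrightarrow> L \<in> \<Theta> \<and> \<not> is_par L"
  by (auto simp: lnodesT_def)

lemma XN_in_lnodesT: "XN L \<in> lnodesT \<Theta> \<longleftrightarrow> L \<in> \<Theta> \<and> is_par L \<and> (\<exists>x\<in>concl L. parprem \<Theta> x)"
  by (auto simp: lnodesT_def)

lemma T_init_simps [simp]:
  "lnodes (T_init \<Theta> n0) = lnodesT \<Theta>" "pnodes (T_init \<Theta> n0) = {L \<in> \<Theta>. is_par L}"
  "lab (T_init \<Theta> n0) = labT \<Theta>" "up (T_init \<Theta> n0) = upT \<Theta>" "dn (T_init \<Theta> n0) = dnT \<Theta>"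
  "le (T_init \<Theta> n0) = leT \<Theta>" "act (T_init \<Theta> n0) = n0"
  by (simp_all add: T_init_def)

context mll_structure
begin

lemma init_region_subset: "k \<in> lnodesT \<Theta> \<Longrightarrow> init_region \<Theta> k \<subseteq> \<Theta>"
  by (cases k) (auto simp: init_region_LN init_region_XN LN_in_lnodesT XN_in_lnodesT)

lemma init_nonpar_owner:
  assumes "k \<in> lnodesT \<Theta>" "X \<in> init_region \<Theta> k" "\<not> is_par X"
  shows "k = LN X"
  using assms by (cases k) (auto simp: init_region_LN init_region_XN XN_in_lnodesT)

lemma tens_prem_not_parprem:
  assumes "L \<in> \<Theta>" "is_tens L" "x \<in> prems L"
  shows "\<not> parprem \<Theta> x"
  using assms prems_unique unfolding parprem_def leftp_def rightp_def by fastforce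

lemma init_par_owner:
  assumes "k \<in> lnodesT \<Theta>" "X \<in> init_region \<Theta> k" "X = ParL a b c"
  shows "(\<exists>L\<in>\<Theta>. k = LN L \<and> is_tens L \<and> c \<in> prems L) \<or> k = XN X \<and> parprem \<Theta> c"
  using assms by (cases k) (auto simp: init_region_LN init_region_XN LN_in_lnodesT XN_in_lnodesT)

lemma init_disjoint:
  assumes k: "k \<in> lnodesT \<Theta>" and k': "k' \<in> lnodesT \<Theta>" and "k \<noteq> k'"
  shows "init_region \<Theta> k \<inter> init_region \<Theta> k' = {}"
proof (rule ccontr)
  assume "init_region \<Theta> k \<inter> init_region \<Theta> k' \<noteq> {}"
  then obtain X where X: "X \<in> init_region \<Theta> k" "X \<in> init_region \<Theta> k'"
    by blast
  show False
  proof (cases "is_par X")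
    case False
    then show False
      using init_nonpar_owner[OF k X(1)] init_nonpar_owner[OF k' X(2)] \<open>k \<noteq> k'\<close> by simp
  next
    case True
    then obtain a b c where "X = ParL a b c"
      by (rule is_par_cases)
    then show False
      using init_par_owner[OF k X(1)] init_par_owner[OF k' X(2)] \<open>k \<noteq> k'\<close>
        prems_unique tens_prem_not_parprem by metis
  qed
qed

lemma init_cover:
  assumes X: "X \<in> \<Theta>"
  shows "(\<exists>k\<in>lnodesT \<Theta>. X \<in> init_region \<Theta> k) \<or> is_par X \<and> concl X \<subseteq> concls \<Theta>"
proof (cases "is_par X")
  case False
  then have "LN X \<in> lnodesT \<Theta>" "X \<in> init_region \<Theta> (LN X)"
    using X by (simp_all add: LN_in_lnodesT init_region_LN)
  then show ?thesis
    by blast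
next
  case True
  then obtain a b c where abc: "X = ParL a b c"
    by (rule is_par_cases)
  show ?thesis
  proof (cases "\<exists>L\<in>\<Theta>. c \<in> prems L")
    case True
    then obtain L where L: "L \<in> \<Theta>" "c \<in> prems L"
      by blast
    then have "XN X \<in> lnodesT \<Theta> \<or> LN L \<in> lnodesT \<Theta> \<and> X \<in> init_region \<Theta> (LN L)"
      using X abc par_prem_parprem[of L \<Theta> c]
      by (cases L) (auto simp: XN_in_lnodesT LN_in_lnodesT init_region_LN)
    then show ?thesis
      using init_region_XN[of \<Theta> X] by blast
  qed (use X abc in \<open>force simp: concls_def occs_def\<close>)
qed

lemma init_up_nodes:
  assumes "(k, P) \<in> upT \<Theta>"
  shows "k \<in> lnodesT \<Theta> \<and> P \<in> \<Theta> \<and> is_par P"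
  using assms unfolding upT_def
  by (fastforce simp: LN_in_lnodesT XN_in_lnodesT leftp_def parprem_def)

lemma init_dn_iff:
  "(k, P) \<in> dnT \<Theta> \<longleftrightarrow> k \<in> lnodesT \<Theta> \<and> P \<in> \<Theta> \<and> is_par P \<and> P \<in> init_region \<Theta> k"
  by (cases k)
    (auto simp: dnT_def LN_in_lnodesT XN_in_lnodesT init_region_LN init_region_XN tens_not_par)

lemma init_le_linked:
  assumes "e \<in> leT \<Theta>"
  shows "dr_linked \<Theta> (T_init \<Theta> n0) (init_region \<Theta>) e"
proof -
  obtain P C x where PC: "e = {LN P, LN C}" "P \<in> \<Theta>" "C \<in> \<Theta>" "\<not> is_par P" "is_tens C"
    and x: "x \<in> concl P" "x \<in> prems C"
    using assms unfolding leT_def by blast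
  obtain p q c where C: "C = TensL p q c"
    using PC(5) by (cases C) auto
  have "P \<noteq> C"
    using concl_not_prems[OF PC(2) x(1)] x(2) by blast
  moreover have "P \<in> init_region \<Theta> (LN P)" "C \<in> init_region \<Theta> (LN C)"
    by (simp_all add: init_region_LN)
  moreover have "c \<in> concl C"
    using C by simp
  ultimately have "x \<in> produced (init_region \<Theta> (LN P))" "c \<in> produced (init_region \<Theta> (LN C))"
    using x(1) unfolding produced_def by blast+
  moreover have "(x, c) \<in> dr_link C" "C \<notin> {L \<in> \<Theta>. is_par L}"
    using C x(2) by auto
  then have "(x, c) \<in> (dr_without \<Theta> {L \<in> \<Theta>. is_par L})\<^sup>*"
    using PC(3) unfolding dr_without_def by blast
  moreover have "LN P \<in> lnodesT \<Theta>" "LN C \<in> lnodesT \<Theta>"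
    using PC by (simp_all add: LN_in_lnodesT tens_not_par)
  ultimately show ?thesis
    unfolding dr_linked_def T_init_simps using PC(1) \<open>P \<noteq> C\<close>
    by (intro exI[of _ "LN P"] exI[of _ "LN C"]) auto
qed

lemma symsT_below_tens:
  assumes "L \<in> \<Theta>" "P \<in> init_region \<Theta> (LN L)" "P \<noteq> L"
  shows "symsT \<Theta> P = {}"
proof -
  obtain x where "concl P = {x}" "x \<in> prems L" "is_tens L"
    using assms(2,3) by (auto simp: init_region_LN elim: is_par_cases)
  then show ?thesis
    using tens_prem_not_parprem[OF assms(1)] unfolding symsT_def parprem_def by auto
qed

lemma init_labels:
  assumes "k \<in> lnodesT \<Theta>"
  shows "labT \<Theta> k = (\<Union>L\<in>init_region \<Theta> k. symsT \<Theta> L)"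
proof (cases k)
  case (LN L)
  then have "L \<in> \<Theta>"
    using assms by (simp add: LN_in_lnodesT)
  have "init_region \<Theta> k = insert L (init_region \<Theta> k - {L})"
    using LN by (auto simp: init_region_LN)
  then have "(\<Union>P\<in>init_region \<Theta> k. symsT \<Theta> P) = symsT \<Theta> L \<union> (\<Union>P\<in>init_region \<Theta> k - {L}. symsT \<Theta> P)"
    by (metis UN_insert)
  also have "\<dots> = symsT \<Theta> L"
    using symsT_below_tens[OF \<open>L \<in> \<Theta>\<close>] LN by simp
  finally show ?thesis
    using LN by simp
qed (simp add: init_region_XN)

lemma init_connected:
  assumes k: "k \<in> lnodesT \<Theta>"
    and xy: "x \<in> produced (init_region \<Theta> k)" "y \<in> produced (init_region \<Theta> k)"
  shows "(x, y) \<in> (dr_without \<Theta> {L \<in> \<Theta>. is_par L})\<^sup>*"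
proof (cases k)
  case (XN P)
  then have "is_par P"
    using k by (simp add: XN_in_lnodesT)
  then have "x = y"
    using xy XN unfolding produced_def by (auto simp: init_region_XN elim: is_par_cases)
  then show ?thesis
    by simp
next
  case (LN L)
  then have L: "L \<in> \<Theta>" "\<not> is_par L"
    using k by (simp_all add: LN_in_lnodesT)
  have "produced (init_region \<Theta> k) \<subseteq> occ L"
    using LN unfolding produced_def by (auto simp: init_region_LN occ_def elim!: is_par_cases)
  then have "(x, y) \<in> (dr_link L)\<^sup>*"
    using dr_link_connected[OF L(2)] xy by blast
  moreover have "dr_link L \<subseteq> dr_without \<Theta> {L \<in> \<Theta>. is_par L}"
    using L unfolding dr_without_def by auto
  ultimately show ?thesis
    using rtrancl_mono by blast
qed

lemma leT_tens_edge:
  assumes "P \<in> \<Theta>" "C \<in> \<Theta>" "\<not> is_par P" "is_tens C" "x \<in> concl P" "x \<in> prems C"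
  shows "{LN P, LN C} \<in> leT \<Theta>"
  using assms unfolding leT_def by blast

lemma init_up_edge:
  assumes k: "k \<in> lnodesT \<Theta>" and X: "X \<in> init_region \<Theta> k" and x: "x \<in> concl X"
    and Y: "Y = ParL x b c" "Y \<in> \<Theta>"
  shows "(k, Y) \<in> upT \<Theta>"
proof (cases k)
  case (LN L)
  then have L: "L \<in> \<Theta>" "\<not> is_par L"
    using k by (simp_all add: LN_in_lnodesT)
  have "X = L"
  proof (rule ccontr)
    assume "X \<noteq> L"
    then have "is_par X" "concl X \<inter> prems L \<noteq> {}"
      using X LN by (simp_all add: init_region_LN)
    then have "x \<in> prems L"
      using x by (auto elim: is_par_cases)
    then have "L = Y"
      using prems_unique[OF L(1) Y(2)] Y(1) by simp
    then show False
      using L(2) Y(1) by simp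
  qed
  then show ?thesis
    using LN L x Y unfolding upT_def leftp_def by blast
next
  case (XN P)
  then have "X = P" "P \<in> \<Theta>" "is_par P"
    using k X by (simp_all add: init_region_XN XN_in_lnodesT)
  then show ?thesis
    using XN x Y unfolding upT_def leftp_def by blast
qed

lemma init_boundary_above:
  assumes k: "k \<in> lnodesT \<Theta>" and X: "X \<in> init_region \<Theta> k" and Y: "Y \<in> \<Theta> - init_region \<Theta> k"
    and x: "x \<in> concl X" "x \<in> prems Y"
  shows "boundary_ok (T_init \<Theta> n0) (init_region \<Theta>) k X Y x"
proof (cases Y)
  case (ParL a' b' c')
  then show ?thesis
    using init_up_edge[OF k X x(1)] Y x(2) unfolding boundary_ok_def by auto
next
  case (TensL p q c')
  have LN_Y: "LN Y \<in> lnodesT \<Theta>" "Y \<in> init_region \<Theta> (LN Y)"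
    using Y TensL by (simp_all add: LN_in_lnodesT init_region_LN)
  show ?thesis
  proof (cases "is_par X")
    case False
    then have "k = LN X"
      using init_nonpar_owner[OF k X] by simp
    moreover have "{LN X, LN Y} \<in> leT \<Theta>"
      using leT_tens_edge[of X Y x] init_region_subset[OF k] X Y x False TensL by auto
    ultimately show ?thesis
      using LN_Y unfolding boundary_ok_def by auto
  next
    case True
    then have "X \<in> init_region \<Theta> (LN Y)"
      using init_region_subset[OF k] X Y x TensL by (auto simp: init_region_LN)
    then have "k = LN Y"
      using init_disjoint[OF k LN_Y(1)] X by blast
    then show ?thesis
      using Y LN_Y by simp
  qed
qed (use x in simp)

lemma init_boundary_below:
  assumes k: "k \<in> lnodesT \<Theta>" and X: "X \<in> init_region \<Theta> k" and Y: "Y \<in> \<Theta> - init_region \<Theta> k"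
    and x: "x \<in> prems X" "x \<in> concl Y"
  shows "boundary_ok (T_init \<Theta> n0) (init_region \<Theta>) k X Y x"
proof (cases X)
  case (ParL a' b' c')
  then show ?thesis
    using init_region_subset[OF k] X x(1) unfolding boundary_ok_def by auto
next
  case (TensL p q c')
  then have "k = LN X"
    using init_nonpar_owner[OF k X] by simp
  show ?thesis
  proof (cases "is_par Y")
    case False
    have "{LN Y, LN X} \<in> leT \<Theta>"
      using leT_tens_edge[of Y X x] init_region_subset[OF k] X Y x False TensL by auto
    moreover have "LN Y \<in> lnodesT \<Theta>" "Y \<in> init_region \<Theta> (LN Y)"
      using Y False by (simp_all add: LN_in_lnodesT init_region_LN)
    ultimately show ?thesis
      using \<open>k = LN X\<close> unfolding boundary_ok_def by (auto simp: insert_commute)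
  next
    case True
    then have "Y \<in> init_region \<Theta> (LN X)"
      using init_region_subset[OF k] X Y x TensL by (auto simp: init_region_LN)
    then show ?thesis
      using Y \<open>k = LN X\<close> by simp
  qed
qed (use x in simp)

lemma init_boundary:
  assumes k: "k \<in> lnodesT \<Theta>" and X: "X \<in> init_region \<Theta> k" and Y: "Y \<in> \<Theta> - init_region \<Theta> k"
    and x: "x \<in> occ X" "x \<in> occ Y"
  shows "boundary_ok (T_init \<Theta> n0) (init_region \<Theta>) k X Y x"
  using shared_occ[of X Y x] init_region_subset[OF k] X Y x
    init_boundary_above[OF k X Y] init_boundary_below[OF k X Y] by blast

lemma initial_invariant:
  assumes "n0 \<in> lnodesT \<Theta>"
  shows "region_invariant fm \<Theta> (T_init \<Theta> n0) (init_region \<Theta>)"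
proof unfold_locales
  show "init_region \<Theta> k \<noteq> {}" if "k \<in> lnodes (T_init \<Theta> n0)" for k
    by (cases k) (auto simp: init_region_def)
qed (use assms proof_structure init_region_subset init_disjoint init_cover init_up_nodes init_dn_iff
  init_le_linked init_labels init_boundary init_connected in auto)

end

section \<open>Rewriting preserves the invariant\<close>

lemma boundary_ok_act_update [simp]: "boundary_ok (s\<lparr>act := m\<rparr>) = boundary_ok s"
  by (intro ext) (simp add: boundary_ok_def)

lemma dr_linked_act_update [simp]: "dr_linked \<Theta> (s\<lparr>act := m\<rparr>) = dr_linked \<Theta> s"
  by (intro ext) (simp add: dr_linked_def)

lemma (in region_invariant) jump_invariant:
  assumes "m \<in> lnodes s"
  shows "region_invariant fm \<Theta> (s\<lparr>act := m\<rparr>) reg"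
  by unfold_locales
    (use assms region_nonempty region_subset regions_disjoint regions_cover pnodes_par up_nodes
      dn_iff le_linked labels boundary region_connected in auto)

lemma merge_simps [simp]:
  "lnodes (merge s n m) = lnodes s - {m}"
  "pnodes (merge s n m) = pnodes s"
  "act (merge s n m) = act s"
  "lab (merge s n m) = (lab s)(m := {}, n := lab s n \<union> lab s m)"
  "up (merge s n m) = {(ren m n x, L) |x L. (x, L) \<in> up s}"
  "dn (merge s n m) = {(ren m n x, L) |x L. (x, L) \<in> dn s}"
  "le (merge s n m) = (\<lambda>e. ren m n ` e) ` (le s - {{n, m}})"
  by (simp_all add: merge_def)

lemma ren_eq_iff: "ren m n p = ren m n q \<longleftrightarrow> p = q \<or> {p, q} = {n, m} \<or> p = m \<and> q = m"
  unfolding ren_def by auto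

locale union_step = region_invariant +
  fixes n m
  assumes act_n: "act s = n" and m_lnode: "m \<in> lnodes s" and m_n: "m \<noteq> n" and edge: "{n, m} \<in> le s"
begin

abbreviation "merged \<equiv> merge s n m"
abbreviation "merged_reg \<equiv> reg(n := reg n \<union> reg m)"
abbreviation "redirect \<equiv> ren m n"

lemma n_lnode: "n \<in> lnodes s"
  using active act_n by simp

lemma ren_lnode: "x \<in> lnodes s \<Longrightarrow> redirect x \<in> lnodes merged"
  using n_lnode m_n by (auto simp: ren_def)

lemma region_ren: "X \<in> reg x \<Longrightarrow> X \<in> merged_reg (redirect x)"
  by (auto simp: ren_def)

lemma produced_ren: "x \<in> produced (reg p) \<Longrightarrow> x \<in> produced (merged_reg (redirect p))"
  using region_ren unfolding produced_def by blast

lemma region_source: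
  assumes "k \<in> lnodes merged" "X \<in> merged_reg k"
  obtains j where "j \<in> lnodes s" "X \<in> reg j" "redirect j = k"
  using assms n_lnode m_lnode by (cases "k = n") (auto simp: ren_def)

lemma merged_disjoint:
  assumes "k \<in> lnodes merged" "k' \<in> lnodes merged" "k \<noteq> k'"
  shows "merged_reg k \<inter> merged_reg k' = {}"
  using assms regions_disjoint n_lnode m_lnode by (auto simp: ren_def)

lemma merged_cover:
  assumes "X \<in> \<Theta>"
  shows "(\<exists>k\<in>lnodes merged. X \<in> merged_reg k) \<or> X \<in> pnodes merged \<and> concl X \<subseteq> concls \<Theta>"
proof (cases "\<exists>j\<in>lnodes s. X \<in> reg j")
  case True
  then obtain j where "j \<in> lnodes s" "X \<in> reg j"
    by blast
  then show ?thesis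
    using ren_lnode region_ren by blast
next
  case False
  then show ?thesis
    using regions_cover[OF assms] by simp
qed

lemma merged_dn_iff: "(k, P) \<in> dn merged \<longleftrightarrow> k \<in> lnodes merged \<and> P \<in> pnodes merged \<and> P \<in> merged_reg k"
proof
  assume "(k, P) \<in> dn merged"
  then obtain j where "k = redirect j" "(j, P) \<in> dn s"
    by auto
  then show "k \<in> lnodes merged \<and> P \<in> pnodes merged \<and> P \<in> merged_reg k"
    using dn_iff[of j P] ren_lnode[of j] region_ren[of P j] by simp
next
  assume k: "k \<in> lnodes merged \<and> P \<in> pnodes merged \<and> P \<in> merged_reg k"
  then obtain j where "j \<in> lnodes s" "P \<in> reg j" "redirect j = k"
    using region_source by blast
  then have "(j, P) \<in> dn s"
    using k dn_iff by simp
  then show "(k, P) \<in> dn merged"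
    using \<open>redirect j = k\<close> by auto
qed

lemma merged_le_linked:
  assumes "e' \<in> le merged"
  shows "dr_linked \<Theta> merged merged_reg e'"
proof -
  obtain e where e: "e' = redirect ` e" "e \<in> le s" "e \<noteq> {n, m}"
    using assms by auto
  then obtain p q x y where pq: "e = {p, q}" "p \<noteq> q" "p \<in> lnodes s" "q \<in> lnodes s"
    and xy: "x \<in> produced (reg p)" "y \<in> produced (reg q)" "(x, y) \<in> (dr_without \<Theta> (pnodes s))\<^sup>*"
    using le_linked unfolding dr_linked_def by blast
  have "redirect p \<noteq> redirect q"
    using pq(1,2) e(3) unfolding ren_eq_iff by blast
  moreover have "e' = {redirect p, redirect q}"
    using e(1) pq(1) by simp
  ultimately show ?thesis
    unfolding dr_linked_def
    using ren_lnode[OF pq(3)] ren_lnode[OF pq(4)] produced_ren[OF xy(1)] produced_ren[OF xy(2)]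
      xy(3)
    by (intro exI[of _ "redirect p"] exI[of _ "redirect q"] conjI bexI[of _ x] bexI[of _ y])
      simp_all
qed

lemma merged_labels: "k \<in> lnodes merged \<Longrightarrow> lab merged k = (\<Union>L\<in>merged_reg k. symsT \<Theta> L)"
  using labels n_lnode m_lnode by auto

lemma merged_boundary:
  assumes k: "k \<in> lnodes merged" and X: "X \<in> merged_reg k" and Y: "Y \<in> \<Theta> - merged_reg k"
    and x: "x \<in> occ X" "x \<in> occ Y"
  shows "boundary_ok merged merged_reg k X Y x"
proof -
  obtain j where j: "j \<in> lnodes s" "X \<in> reg j" "redirect j = k"
    using k X by (rule region_source)
  then have "Y \<notin> reg j"
    using Y region_ren by blast
  then have "boundary_ok s reg j X Y x"
    using boundary j(1,2) Y x by blast
  then show ?thesis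
  proof (cases rule: boundary_okE)
    case (adjacent m')
    have Y': "Y \<in> merged_reg (redirect m')"
      using adjacent(2) by (rule region_ren)
    have "{j, m'} \<noteq> {n, m}"
    proof
      assume "{j, m'} = {n, m}"
      then have "redirect m' = redirect j"
        using m_n by (auto simp: ren_def doubleton_eq_iff)
      then show False
        using Y Y' j(3) by simp
    qed
    then have "redirect ` {j, m'} \<in> le merged"
      using adjacent(3) unfolding merge_simps by (intro imageI) simp
    then have "{k, redirect m'} \<in> le merged"
      using j(3) by simp
    with ren_lnode[OF adjacent(1)] Y' show ?thesis
      by (rule boundary_ok_adjacentI)
  next
    case par_below
    then show ?thesis
      using j(3) by (intro boundary_ok_par_belowI) auto
  next
    case par_in_region
    then show ?thesis
      by (intro boundary_ok_par_in_regionI) simp_all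
  qed
qed

lemma merged_connected:
  assumes k: "k \<in> lnodes merged" and xy: "x \<in> produced (merged_reg k)" "y \<in> produced (merged_reg k)"
  shows "(x, y) \<in> (dr_without \<Theta> (pnodes merged))\<^sup>*"
proof (cases "k = n")
  case False
  then show ?thesis
    using region_connected[of k x y] k xy by simp
next
  case True
  let ?R = "(dr_without \<Theta> (pnodes s))\<^sup>*"
  have "\<exists>u\<in>produced (reg n). \<exists>w\<in>produced (reg m). (u, w) \<in> ?R"
    using le_linked[OF edge] m_n dr_without_sym unfolding dr_linked_def
    by (fastforce simp: doubleton_eq_iff)
  then obtain u w where uw: "u \<in> produced (reg n)" "w \<in> produced (reg m)" "(u, w) \<in> ?R"
    by blast
  have to_u: "(z, u) \<in> ?R" if "z \<in> produced (merged_reg n)" for z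
  proof -
    have "z \<in> produced (reg n) \<or> z \<in> produced (reg m)"
      using that by (simp add: produced_Un)
    then show ?thesis
      using region_connected[OF n_lnode _ uw(1)] region_connected[OF m_lnode _ uw(2)]
        dr_without_sym[OF uw(3)]
      by (meson rtrancl_trans)
  qed
  have "(x, u) \<in> ?R" "(u, y) \<in> ?R"
    using to_u[of x] dr_without_sym[OF to_u[of y]] xy True by simp_all
  then show ?thesis
    by (simp add: rtrancl_trans[of x u])
qed

lemma union_invariant: "region_invariant fm \<Theta> merged merged_reg"
proof unfold_locales
  show "act merged \<in> lnodes merged"
    using act_n n_lnode m_n by simp
  show "merged_reg k \<noteq> {}" "merged_reg k \<subseteq> \<Theta>" if "k \<in> lnodes merged" for k
    using that region_nonempty region_subset m_lnode by auto
  show "pnodes merged \<subseteq> {P \<in> \<Theta>. is_par P}"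
    using pnodes_par by simp
  show "k \<in> lnodes merged \<and> P \<in> pnodes merged" if "(k, P) \<in> up merged" for k P
    using that up_nodes ren_lnode by auto
qed (use proof_structure merged_disjoint merged_cover merged_dn_iff merged_le_linked merged_labels
  merged_boundary merged_connected in \<open>simp_all\<close>)

end

lemma pelim_simps [simp]:
  "lnodes (pelim s n L) = lnodes s"
  "pnodes (pelim s n L) = pnodes s - {L}"
  "act (pelim s n L) = act s"
  "lab (pelim s n L) = lab s"
  "up (pelim s n L) = {p \<in> up s. snd p \<noteq> L}"
  "dn (pelim s n L) = {p \<in> dn s. snd p \<noteq> L}"
  "le (pelim s n L) = le s \<union> {{n, m} |m. (m, L) \<in> dn s}"
  by (simp_all add: pelim_def)

locale par_elim_step = region_invariant +
  fixes n L a b c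
  assumes tree: "is_tree (occs \<Theta>) (dr_edges \<Theta>)"
    and act_n: "act s = n"
    and L: "L \<in> pnodes s"
    and up_n: "(n, L) \<in> up s"
    and left: "Lsym L \<in> lab s n"
    and right: "Rsym L \<in> lab s n"
    and L_eq [simp]: "L = ParL a b c"
begin

abbreviation "reduced \<equiv> pelim s n L"

lemma n_lnode: "n \<in> lnodes s"
  using active act_n by simp

lemma L_in: "L \<in> \<Theta>"
  using L pnodes_par by blast

lemma premise_producer_active:
  assumes "Z \<in> \<Theta>" "x \<in> prems L" "x \<in> concl Z"
  shows "Z \<in> reg n"
proof -
  obtain Xa Xb where "Xa \<in> reg n" "a \<in> concl Xa" "Xb \<in> reg n" "b \<in> concl Xb"
    using left right labels[OF n_lnode] by (auto simp: Lsym_symsT Rsym_symsT)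
  then show ?thesis
    using assms concl_unique[OF assms(1)] region_subset[OF n_lnode] by auto
qed

lemma shared_with_L:
  assumes "Y \<in> \<Theta>" "Y \<noteq> L" "x \<in> occ L" "x \<in> occ Y"
  shows "x \<in> prems L \<and> Y \<in> reg n \<or> x = c \<and> x \<in> prems Y"
  using shared_occ[OF L_in assms(1) assms(2)[symmetric] assms(3,4)]
    premise_producer_active[OF assms(1)]
  by auto

lemma a_produced: "a \<in> produced (reg n)"
proof -
  obtain Z where "Z \<in> \<Theta>" "a \<in> concl Z"
    using prem_produced[OF L_in, of a] by auto
  then show ?thesis
    using premise_producer_active unfolding produced_def by auto
qed

lemma edge_ac: "(a, c) \<in> (dr_without \<Theta> (pnodes reduced))\<^sup>*"
  using L_in unfolding dr_without_def by force

lemma connected_after: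
  "(x, y) \<in> (dr_without \<Theta> (pnodes s))\<^sup>* \<Longrightarrow> (x, y) \<in> (dr_without \<Theta> (pnodes reduced))\<^sup>*"
  by (rule dr_without_antimono) auto

(* Otherwise the region of n would join a to c without the DR-edge of L: a cycle. *)
lemma below_not_active:
  assumes "(m, L) \<in> dn s"
  shows "m \<noteq> n"
proof
  assume "m = n"
  then have "c \<in> produced (reg n)"
    using assms dn_iff unfolding produced_def by force
  then have "(a, c) \<in> (dr_without \<Theta> (pnodes s))\<^sup>*"
    using region_connected[OF n_lnode a_produced] by blast
  then show False
    using par_edge_no_detour[OF tree _ L[unfolded L_eq]] pnodes_par by blast
qed

lemma premise_sharer_active:
  assumes "Y \<in> \<Theta>" "Y \<noteq> L" "x \<in> prems L" "x \<in> occ Y"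
  shows "Y \<in> reg n"
  using shared_with_L[OF assms(1,2) _ assms(4)] assms(3) concl_not_prems[OF L_in, of c]
  by (auto simp: occ_def)

(* The par-node of L hangs below the labeled node m0, which becomes a neighbour of n. *)
context
  fixes m0
  assumes owner: "m0 \<in> lnodes s" "L \<in> reg m0"
begin

lemma owner_edge: "{n, m0} \<in> le reduced"
  using owner L dn_iff by auto

lemma owned_cover:
  assumes "X \<in> \<Theta>"
  shows "(\<exists>k\<in>lnodes reduced. X \<in> reg k) \<or> X \<in> pnodes reduced \<and> concl X \<subseteq> concls \<Theta>"
  using regions_cover[OF assms] owner by (cases "X = L") auto

lemma owned_le_linked:
  assumes "e \<in> le reduced"
  shows "dr_linked \<Theta> reduced reg e"
proof -
  consider "e \<in> le s" | m where "e = {n, m}" "(m, L) \<in> dn s"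
    using assms by auto
  then show ?thesis
  proof cases
    case 1
    then obtain p q x y where pq: "e = {p, q}" "p \<noteq> q" "p \<in> lnodes s" "q \<in> lnodes s"
      and xy: "x \<in> produced (reg p)" "y \<in> produced (reg q)" "(x, y) \<in> (dr_without \<Theta> (pnodes s))\<^sup>*"
      using le_linked unfolding dr_linked_def by blast
    then have "(x, y) \<in> (dr_without \<Theta> (pnodes reduced))\<^sup>*"
      using connected_after by blast
    then show ?thesis
      unfolding dr_linked_def using pq xy(1,2) unfolding pelim_simps(1) by blast
  next
    case 2
    then have "m \<in> lnodes s" "c \<in> produced (reg m)" "m \<noteq> n"
      using dn_iff below_not_active unfolding produced_def by force+
    then show ?thesis
      unfolding dr_linked_def using 2(1) n_lnode a_produced edge_ac by auto
  qed
qed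

lemma owned_boundary:
  assumes k: "k \<in> lnodes reduced" and X: "X \<in> reg k" and Y: "Y \<in> \<Theta> - reg k"
    and x: "x \<in> occ X" "x \<in> occ Y"
  shows "boundary_ok reduced reg k X Y x"
proof -
  have "boundary_ok s reg k X Y x"
    using boundary k X Y x by simp
  then show ?thesis
  proof (cases rule: boundary_okE)
    case (adjacent m')
    then show ?thesis
      by (intro boundary_ok_adjacentI) auto
  next
    case par_below
    show ?thesis
    proof (cases "Y = L")
      case True
      have "X \<in> reg n"
        using premise_sharer_active[of X x] X Y x par_below(2) True region_subset k by auto
      then have "k = n"
        using regions_disjoint[of k n] X k n_lnode by auto
      then show ?thesis
        using True owner owner_edge by (intro boundary_ok_adjacentI) auto
    qed (use par_below in \<open>auto intro: boundary_ok_par_belowI\<close>)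
  next
    case par_in_region
    show ?thesis
    proof (cases "X = L")
      case True
      have "Y \<in> reg n"
        using premise_sharer_active[of Y x] X Y x par_in_region(2) True by auto
      moreover have "k = m0"
        using regions_disjoint[of k m0] X k owner True by auto
      ultimately show ?thesis
        using n_lnode owner_edge by (intro boundary_ok_adjacentI) (auto simp: insert_commute)
    qed (use par_in_region in \<open>auto intro: boundary_ok_par_in_regionI\<close>)
  qed
qed

lemma owned_invariant: "region_invariant fm \<Theta> reduced reg"
  by unfold_locales
    (use proof_structure active region_nonempty region_subset regions_disjoint owned_cover
      pnodes_par up_nodes dn_iff owned_le_linked labels owned_boundary region_connected
      connected_after in auto)

end

abbreviation "reduced_reg \<equiv> reg(n := insert L (reg n))"

(* The par-node of L has degree 1, and L joins the region of n. *)
context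
  assumes unowned: "\<forall>k\<in>lnodes s. L \<notin> reg k"
begin

lemma c_concl: "c \<in> concls \<Theta>"
  using regions_cover[OF L_in] unowned by auto

lemma symsT_L: "symsT \<Theta> L = {}"
  using c_concl unfolding symsT_def leftp_def rightp_def concls_def by auto

lemma le_unchanged: "le reduced = le s"
  using dn_iff unowned by auto

lemma L_owner: "k \<in> lnodes s \<Longrightarrow> L \<in> reduced_reg k \<Longrightarrow> k = n"
  using unowned by (cases "k = n") auto

lemma produced_grows: "x \<in> produced (reg k) \<Longrightarrow> x \<in> produced (reduced_reg k)"
  unfolding produced_def by auto

lemma unowned_disjoint:
  "k \<in> lnodes reduced \<Longrightarrow> k' \<in> lnodes reduced \<Longrightarrow> k \<noteq> k' \<Longrightarrow> reduced_reg k \<inter> reduced_reg k' = {}"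
  using regions_disjoint unowned by auto

lemma unowned_cover:
  assumes "X \<in> \<Theta>"
  shows "(\<exists>k\<in>lnodes reduced. X \<in> reduced_reg k) \<or> X \<in> pnodes reduced \<and> concl X \<subseteq> concls \<Theta>"
proof (cases "X = L")
  case True
  then show ?thesis
    using n_lnode by auto
next
  case False
  then show ?thesis
    using regions_cover[OF assms]
    by (metis DiffI fun_upd_apply insertCI pelim_simps(1,2) singletonD)
qed

lemma unowned_dn_iff:
  "(k, P) \<in> dn reduced \<longleftrightarrow> k \<in> lnodes reduced \<and> P \<in> pnodes reduced \<and> P \<in> reduced_reg k"
  using dn_iff by auto

lemma unowned_le_linked:
  assumes "e \<in> le reduced"
  shows "dr_linked \<Theta> reduced reduced_reg e"
proof -
  obtain p q x y where pq: "e = {p, q}" "p \<noteq> q" "p \<in> lnodes s" "q \<in> lnodes s"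
    and xy: "x \<in> produced (reg p)" "y \<in> produced (reg q)" "(x, y) \<in> (dr_without \<Theta> (pnodes s))\<^sup>*"
    using le_linked assms le_unchanged unfolding dr_linked_def by blast
  moreover have "x \<in> produced (reduced_reg p)" "y \<in> produced (reduced_reg q)"
    using produced_grows xy(1,2) by blast+
  moreover have "(x, y) \<in> (dr_without \<Theta> (pnodes reduced))\<^sup>*"
    using xy(3) by (rule connected_after)
  ultimately show ?thesis
    unfolding dr_linked_def pelim_simps(1) by blast
qed

lemma unowned_labels: "k \<in> lnodes reduced \<Longrightarrow> lab reduced k = (\<Union>L\<in>reduced_reg k. symsT \<Theta> L)"
  using labels symsT_L by auto

lemma unowned_boundary_avoids_L:
  assumes k: "k \<in> lnodes reduced" and X: "X \<in> reduced_reg k" and Y: "Y \<in> \<Theta> - reduced_reg k"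
    and x: "x \<in> occ X" "x \<in> occ Y"
  shows "X \<noteq> L" "Y \<noteq> L"
proof -
  have X_in: "X \<in> \<Theta>"
    using X k region_subset L_in by (cases "k = n") auto
  have not_c: "\<not> (x = c \<and> x \<in> prems Z)" if "Z \<in> \<Theta>" for Z
    using concls_not_prem[OF c_concl that] by blast
  show "X \<noteq> L"
  proof
    assume XL: "X = L"
    have "k = n"
      by (rule L_owner) (use k X XL in simp_all)
    then have "Y \<noteq> L" "Y \<notin> reg n"
      using Y by auto
    then show False
      using shared_with_L[of Y x] not_c[of Y] Y x XL by blast
  qed
  then have Xk: "X \<in> reg k"
    using X by (cases "k = n") auto
  show "Y \<noteq> L"
  proof
    assume YL: "Y = L"
    then have "X \<in> reg n"
      using shared_with_L[OF X_in \<open>X \<noteq> L\<close>, of x] not_c[OF X_in] x by blast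
    then have "k = n"
      using regions_disjoint[of k n] Xk k n_lnode by auto
    then show False
      using Y YL by simp
  qed
qed

lemma unowned_boundary:
  assumes k: "k \<in> lnodes reduced" and X: "X \<in> reduced_reg k" and Y: "Y \<in> \<Theta> - reduced_reg k"
    and x: "x \<in> occ X" "x \<in> occ Y"
  shows "boundary_ok reduced reduced_reg k X Y x"
proof -
  note avoids = unowned_boundary_avoids_L[OF k X Y x]
  have "boundary_ok s reg k X Y x"
    using boundary k X Y x avoids by (cases "k = n") auto
  then show ?thesis
  proof (cases rule: boundary_okE)
    case (adjacent m')
    then have "Y \<in> reduced_reg m'"
      by (cases "m' = n") auto
    then show ?thesis
      using adjacent(1,3) le_unchanged by (intro boundary_ok_adjacentI) auto
  next
    case par_below
    then show ?thesis
      using avoids by (intro boundary_ok_par_belowI) auto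
  next
    case par_in_region
    then show ?thesis
      using avoids by (intro boundary_ok_par_in_regionI) auto
  qed
qed

lemma unowned_connected:
  assumes k: "k \<in> lnodes reduced"
    and xy: "x \<in> produced (reduced_reg k)" "y \<in> produced (reduced_reg k)"
  shows "(x, y) \<in> (dr_without \<Theta> (pnodes reduced))\<^sup>*"
proof (cases "k = n")
  case False
  then show ?thesis
    using region_connected[of k x y] connected_after k xy by simp
next
  case True
  let ?R = "(dr_without \<Theta> (pnodes reduced))\<^sup>*"
  have to_a: "(z, a) \<in> ?R" if "z \<in> produced (reduced_reg n)" for z
  proof -
    have "z = c \<or> z \<in> produced (reg n)"
      using that unfolding produced_def by auto
    then show ?thesis
      using dr_without_sym[OF edge_ac] connected_after region_connected[OF n_lnode _ a_produced]
      by auto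
  qed
  have "(x, a) \<in> ?R" "(a, y) \<in> ?R"
    using to_a[of x] dr_without_sym[OF to_a[of y]] xy True by simp_all
  then show ?thesis
    by (simp add: rtrancl_trans[of x a])
qed

lemma unowned_invariant: "region_invariant fm \<Theta> reduced reduced_reg"
proof unfold_locales
  show "reduced_reg k \<noteq> {}" "reduced_reg k \<subseteq> \<Theta>" if "k \<in> lnodes reduced" for k
    using that region_nonempty region_subset L_in by auto
qed (use proof_structure active unowned_disjoint unowned_cover pnodes_par up_nodes unowned_dn_iff
  unowned_le_linked unowned_labels unowned_boundary unowned_connected in auto)

end

lemma elim_invariant: "\<exists>reduced_reg. region_invariant fm \<Theta> reduced reduced_reg"
  using owned_invariant unowned_invariant by blast

end

lemma (in region_invariant) step_invariant:
  assumes step: "astep s k s'" and tree: "is_tree (occs \<Theta>) (dr_edges \<Theta>)"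
  shows "\<exists>reg'. region_invariant fm \<Theta> s' reg'"
  using step
proof cases
  case (par_elim n L)
  obtain a b c where L: "L = ParL a b c"
    using \<open>L \<in> pnodes s\<close> by (rule pnode_cases)
  interpret par_elim_step fm \<Theta> s reg n L a b c
    by unfold_locales (use tree par_elim L in auto)
  show ?thesis
    using elim_invariant par_elim L by simp
next
  case (union n m)
  interpret union_step fm \<Theta> s reg n m
    by unfold_locales (use union in auto)
  show ?thesis
    using union_invariant union by blast
next
  case (local_jump n L m)
  then show ?thesis
    using jump_invariant by blast
qed

lemma (in mll_structure) runs_invariant:
  assumes "runs s J t" "region_invariant fm \<Theta> s reg" "is_tree (occs \<Theta>) (dr_edges \<Theta>)"
  shows "\<exists>reg'. region_invariant fm \<Theta> t reg'"
  using assms(1,2)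
proof (induction arbitrary: reg rule: runs.induct)
  case (runs_refl s)
  then show ?case
    by blast
next
  case (runs_other s s' J t)
  then show ?case
    using region_invariant.step_invariant[OF runs_other.prems runs_other.hyps(1) assms(3)] by blast
next
  case (runs_jump s L s' J t)
  then show ?case
    using region_invariant.step_invariant[OF runs_jump.prems runs_jump.hyps(1) assms(3)] by blast
qed

theorem lemma1:
  fixes fm :: "'o \<Rightarrow> form" and \<Theta> :: "'o link set"
  assumes "proof_structure fm \<Theta>"
    and "algA_no_at_step5 \<Theta>"
  shows "\<not> proof_net fm \<Theta>"
proof
  assume net: "proof_net fm \<Theta>"
  interpret mll_structure fm \<Theta>
    by unfold_locales (rule assms(1))
  obtain n0 J t where n0: "n0 \<in> lnodesT \<Theta>" and run: "runs (T_init \<Theta> n0) J t"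
    and stuck: "irreducible t" and rejected: "\<not> accepting \<Theta> t"
    using assms(2) unfolding algA_no_at_step5_def by blast
  have tree: "is_tree (occs \<Theta>) (dr_edges \<Theta>)"
    using assms(2) unfolding algA_no_at_step5_def T_defined_def by blast
  obtain reg where "region_invariant fm \<Theta> t reg"
    using runs_invariant[OF run initial_invariant[OF n0] tree] by blast
  then interpret final: region_invariant fm \<Theta> t reg .
  have "reg (act t) = \<Theta>"
    using proof_net_par_isolated[OF net final.region_subset[OF final.active]]
      final.stuck_region_isolated[OF stuck] final.region_nonempty[OF final.active] by blast
  then show False
    using final.stuck_accepting[OF stuck] rejected by blast
qed

end
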